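(* Suppose $0<\delta < \pi/g$. Then for every $\vec \theta \in R_{\delta}^B$ we have $|\Phi(\vec \theta)| \leq 1 - \frac{11}{48} g^{-k} \left( \frac{\delta}{2} \right)^2$.
   Context: Let $g\ge 2$, $k\ge 2$ be integers, $\mathbb Z_g$ the integers mod $g$, and $d=\binom{k}{2}(g-1)$. Index the coordinates of $\mathbb R^d$ by pairs $(\{i,j\},a)$ with $1\le i<j\le k$ and $a\in\mathbb Z_g\setminus\{0\}$. Define $Z:(\mathbb Z_g)^k\to\mathbb R^d$ by $[Z(\vec x)]_{\{i,j\},a}=1-1/g$ if $x_i-x_j=a$ and $-1/g$ otherwise. Define $\Phi(\vec\theta)=\sum_{\vec x\in(\mathbb Z_g)^k} g^{-k}e^{i\vec\theta\cdot Z(\vec x)}$. For $\vec\theta\in[-\pi,\pi)^d$ and $\delta>0$ let $B_\delta(\vec\theta)=\{\vec\mu\in[-\pi,\pi)^d: \vec\mu\equiv\vec\theta+\vec\zeta \pmod{2\pi}$ componentwise, for some $\vec\zeta$ with $|\zeta_{\{i,j\},a}|<\delta$ for all coordinates$\}$. Let $L=\{\vec\theta\in[-\pi,\pi)^d: \theta_{\{i,j\},a}\equiv 0 \pmod{2\pi/g}$ for all coordinates$\}$ and $R_\delta^B=[-\pi,\pi)^d\setminus\bigcup_{\vec\eta\in L}B_\delta(\vec\eta)$. *)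

theory Defs
  imports "HOL-Analysis.Analysis"
begin

text \<open>Coordinates (\{i,j\},a) with 1 \<le> i < j \<le> k and a \<in> Z_g \ {0},
  encoded as triples (i,j,a) with a \<in> {1..g-1} (residue representatives).\<close>
definition coords :: "nat \<Rightarrow> nat \<Rightarrow> (nat \<times> nat \<times> nat) set" where
  "coords g k = {(i,j,a). 1 \<le> i \<and> i < j \<and> j \<le> k \<and> 1 \<le> a \<and> a < g}"

definition points :: "nat \<Rightarrow> nat \<Rightarrow> (nat \<Rightarrow> int) set" where
  "points g k = PiE {1..k} (\<lambda>_. {0..<int g})"

definition Zvec :: "nat \<Rightarrow> (nat \<Rightarrow> int) \<Rightarrow> nat \<times> nat \<times> nat \<Rightarrow> real" where
  "Zvec g x c = (case c of (i,j,a) \<Rightarrow>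
      if (x i - x j) mod int g = int a then 1 - 1 / real g else - 1 / real g)"

definition Phi :: "nat \<Rightarrow> nat \<Rightarrow> (nat \<times> nat \<times> nat \<Rightarrow> real) \<Rightarrow> complex" where
  "Phi g k \<theta> = (\<Sum>x\<in>points g k. complex_of_real (1 / real g ^ k) *
      cis (\<Sum>c\<in>coords g k. \<theta> c * Zvec g x c))"

definition box_d :: "nat \<Rightarrow> nat \<Rightarrow> (nat \<times> nat \<times> nat \<Rightarrow> real) set" where
  "box_d g k = {\<theta>. \<forall>c\<in>coords g k. -pi \<le> \<theta> c \<and> \<theta> c < pi}"

definition Bdelta :: "nat \<Rightarrow> nat \<Rightarrow> real \<Rightarrow> (nat \<times> nat \<times> nat \<Rightarrow> real) \<Rightarrow> (nat \<times> nat \<times> nat \<Rightarrow> real) set" where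
  "Bdelta g k \<delta> \<theta> = {\<mu> \<in> box_d g k. \<exists>\<zeta>. (\<forall>c\<in>coords g k. \<bar>\<zeta> c\<bar> < \<delta> \<and>
      (\<exists>m::int. \<mu> c = \<theta> c + \<zeta> c + 2 * pi * real_of_int m))}"

definition Lset :: "nat \<Rightarrow> nat \<Rightarrow> (nat \<times> nat \<times> nat \<Rightarrow> real) set" where
  "Lset g k = {\<eta> \<in> box_d g k. \<forall>c\<in>coords g k. \<exists>n::int. \<eta> c = real_of_int n * (2 * pi / real g)}"

definition RB :: "nat \<Rightarrow> nat \<Rightarrow> real \<Rightarrow> (nat \<times> nat \<times> nat \<Rightarrow> real) set" where
  "RB g k \<delta> = box_d g k - (\<Union>\<eta>\<in>Lset g k. Bdelta g k \<delta> \<eta>)"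

end

theory Submission
  imports Defs
begin

text \<open>
  Let \<open>\<omega>\<close> be the argument of \<open>\<Phi>(\<theta>)\<close>, so that \<open>|\<Phi>(\<theta>)|\<close> is the average of
  \<open>cos (\<theta>\<cdot>Z(x) - \<omega>)\<close> over all \<open>x\<close>. Suppose every phase \<open>\<theta>\<cdot>Z(x)\<close> were within \<open>\<delta>/2\<close>
  of \<open>\<omega>\<close> modulo \<open>2\<pi>\<close>. For a coordinate \<open>({i,j},a)\<close> compare, for \<open>t \<in> Z_g\<close>, the point
  with \<open>x_i = a + t\<close>, \<open>x_j = t\<close> with the point \<open>x_i = x_j = t\<close> (all other entries \<open>0\<close>):
  summed over \<open>t\<close>, the phase differences are exactly \<open>g \<theta>_{ij,a}\<close>, because every other
  coordinate cancels, either termwise or after the shift \<open>t \<mapsto> a + t\<close> of \<open>Z_g\<close>. Hence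
  \<open>g \<theta>_{ij,a}\<close> is within \<open>g\<delta>\<close> of \<open>2\<pi>\<int>\<close>, i.e. \<open>\<theta>_{ij,a}\<close> is within \<open>\<delta>\<close> of \<open>(2\<pi>/g)\<int>\<close>, and
  \<open>\<theta>\<close> lies in some box \<open>B_\<delta>(\<eta>)\<close> with \<open>\<eta> \<in> L\<close>. So for \<open>\<theta> \<in> R_\<delta>^B\<close> one of the \<open>g^k\<close>
  cosines is at most \<open>cos (\<delta>/2)\<close>, and \<open>1 - cos (\<delta>/2) \<ge> 11/48 (\<delta>/2)^2\<close> as \<open>\<delta>/2 \<le> 1\<close>.
\<close>

lemma sin_ge_cubic:
  fixes y :: real
  assumes "0 \<le> y"
  shows "y - y ^ 3 / 6 \<le> sin y"
proof -
  have "\<bar>sin y - (\<Sum>m<3. sin_coeff m * y ^ m)\<bar> \<le> inverse (fact 3) * \<bar>y\<bar> ^ 3"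
    by (rule Maclaurin_sin_bound)
  moreover have "(\<Sum>m<3. sin_coeff m * y ^ m) = y"
    by (simp add: sin_coeff_def numeral_3_eq_3)
  ultimately have "\<bar>sin y - y\<bar> \<le> y ^ 3 / 6"
    using assms by (simp add: numeral_3_eq_3)
  then show ?thesis
    using abs_le_D2[of "sin y - y"] by linarith
qed

lemma one_minus_cos_ge:
  fixes d :: real
  assumes "0 \<le> d" "d \<le> 1"
  shows "11 / 48 * d ^ 2 \<le> 1 - cos d"
proof -
  define y where "y = d / 2"
  have y: "0 \<le> y" "y \<le> 1 / 2"
    using assms by (auto simp: y_def)
  have "y * y \<le> 1 / 2 * (1 / 2)"
    using y by (intro mult_mono) auto
  then have "y * (y * y) \<le> y * (1 / 4)"
    using y by (intro mult_left_mono) auto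
  then have "23 / 24 * y \<le> sin y"
    using sin_ge_cubic[OF y(1)] by (simp add: power3_eq_cube power2_eq_square)
  then have "(23 / 24 * y) ^ 2 \<le> sin y ^ 2"
    using y by (intro power_mono) auto
  moreover have "1 - cos d = 2 * sin y ^ 2"
    using cos_double_sin[of y] by (simp add: y_def)
  ultimately have "529 / 1152 * d ^ 2 \<le> 1 - cos d"
    by (simp add: y_def power2_eq_square)
  then show ?thesis
    using zero_le_power2[of d] by linarith
qed

lemma cos_le_cos_if_far_from_2pi_multiples:
  fixes t d :: real
  assumes "0 \<le> d" "d \<le> pi" and far: "\<And>m::int. d \<le> \<bar>t - 2 * pi * m\<bar>"
  shows "cos t \<le> cos d"
proof -
  define m where "m = round (t / (2 * pi))"
  define u where "u = t - 2 * pi * m"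
  have "u = 2 * pi * (t / (2 * pi) - m)"
    by (simp add: u_def right_diff_distrib)
  then have "\<bar>u\<bar> = 2 * pi * \<bar>t / (2 * pi) - m\<bar>"
    by (simp add: abs_mult)
  also have "\<dots> \<le> 2 * pi * (1 / 2)"
    using of_int_round_abs_le[of "t / (2 * pi)"] by (intro mult_left_mono) (auto simp: m_def abs_minus_commute)
  finally have "cos \<bar>u\<bar> \<le> cos d"
    using assms far[of m] by (intro cos_monotone_0_pi_le) (auto simp: u_def)
  moreover have "cos t = cos u"
    by (simp add: u_def cos_diff)
  ultimately show ?thesis
    by simp
qed

lemma sum_shift_mod:
  fixes G a :: int and h :: "int \<Rightarrow> 'a::comm_monoid_add"
  assumes "0 < G"
  shows "(\<Sum>t\<in>{0..<G}. h ((a + t) mod G)) = (\<Sum>t\<in>{0..<G}. h t)"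
proof -
  have "bij_betw (\<lambda>t. (a + t) mod G) {0..<G} {0..<G}"
  proof (rule bij_betw_byWitness[where f'="\<lambda>s. (s - a) mod G"])
    show "\<forall>t\<in>{0..<G}. ((a + t) mod G - a) mod G = t"
      by (auto simp: mod_diff_left_eq)
    show "\<forall>s\<in>{0..<G}. (a + (s - a) mod G) mod G = s"
      by (auto simp: mod_add_right_eq)
  qed (use assms in auto)
  then show ?thesis
    by (rule sum.reindex_bij_betw)
qed

lemma finite_coords: "finite (coords g k)"
proof (rule finite_subset)
  show "coords g k \<subseteq> {0..k} \<times> {0..k} \<times> {0..g}"
    by (auto simp: coords_def)
qed auto

lemma finite_points: "finite (points g k)"
  by (simp add: points_def finite_PiE)

lemma card_points: "card (points g k) = g ^ k"
  by (simp add: points_def card_PiE)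

definition phase :: "nat \<Rightarrow> nat \<Rightarrow> (nat \<times> nat \<times> nat \<Rightarrow> real) \<Rightarrow> (nat \<Rightarrow> int) \<Rightarrow> real" where
  "phase g k \<theta> x = (\<Sum>c\<in>coords g k. \<theta> c * Zvec g x c)"

text \<open>The value \<open>undefined\<close> outside \<open>{1..k}\<close> makes the point extensional, as \<open>points g k\<close> requires.\<close>

definition pair_point :: "nat \<Rightarrow> nat \<Rightarrow> nat \<Rightarrow> int \<Rightarrow> int \<Rightarrow> nat \<Rightarrow> int" where
  "pair_point k i j u v =
     (\<lambda>l. if l \<in> {1..k} then (if l = i then u else if l = j then v else 0) else undefined)"

lemma pair_point_in_points:
  "0 \<le> u \<Longrightarrow> u < int g \<Longrightarrow> 0 \<le> v \<Longrightarrow> v < int g \<Longrightarrow> pair_point k i j u v \<in> points g k"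
  by (auto simp: points_def pair_point_def PiE_def extensional_def)

lemma pair_point_apply:
  "l \<in> {1..k} \<Longrightarrow> pair_point k i j u v l = (if l = i then u else if l = j then v else 0)"
  by (simp add: pair_point_def)

lemma sum_Zvec_shifted_pair_point:
  assumes c: "(i, j, a) \<in> coords g k" and c': "c' \<in> coords g k"
  shows "(\<Sum>t\<in>{0..<int g}. Zvec g (pair_point k i j ((int a + t) mod int g) t) c'
                          - Zvec g (pair_point k i j t t) c')
       = (if c' = (i, j, a) then real g else 0)"
proof -
  obtain i' j' b where c'_eq: "c' = (i', j', b)"
    by (cases c') auto
  have ij: "1 \<le> i" "i < j" "j \<le> k" "1 \<le> a" "a < g"
    using c by (auto simp: coords_def)
  have ij': "i' \<in> {1..k}" "j' \<in> {1..k}" "i' < j'" "1 \<le> b"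
    using c' c'_eq by (auto simp: coords_def)
  have shifted_diff: "((int a + t) mod int g - t) mod int g = int a" for t
    using ij by (simp add: mod_diff_left_eq)
  consider (same) "i' = i" "j' = j" | (apart) "i' \<noteq> i" "j' \<noteq> i"
    | (one) "i' = i \<or> j' = i" "i' \<noteq> j" "j' \<noteq> j"
    using ij ij' by force
  then show ?thesis
  proof cases
    case same
    then have "Zvec g (pair_point k i j ((int a + t) mod int g) t) c' - Zvec g (pair_point k i j t t) c'
        = (if b = a then 1 else 0)" for t
      using ij ij' c'_eq shifted_diff by (auto simp: Zvec_def pair_point_apply)
    then show ?thesis
      using same c'_eq by auto
  next
    case apart
    then show ?thesis
      using ij' c'_eq by (simp add: Zvec_def pair_point_apply)
  next
    case one
    define F where "F u = Zvec g (pair_point k i j u 0) c'" for u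
    have "Zvec g (pair_point k i j u v) c' = F u" for u v
      using one ij ij' c'_eq by (auto simp: F_def Zvec_def pair_point_apply)
    moreover have "(\<Sum>t\<in>{0..<int g}. F ((int a + t) mod int g)) = (\<Sum>t\<in>{0..<int g}. F t)"
      using ij by (intro sum_shift_mod) simp
    ultimately show ?thesis
      using one c'_eq by (auto simp: sum_subtractf)
  qed
qed

lemma sum_phase_shifted_pair_point:
  assumes c: "(i, j, a) \<in> coords g k"
  shows "(\<Sum>t\<in>{0..<int g}. phase g k \<theta> (pair_point k i j ((int a + t) mod int g) t)
                          - phase g k \<theta> (pair_point k i j t t))
       = real g * \<theta> (i, j, a)"
proof -
  have "(\<Sum>t\<in>{0..<int g}. phase g k \<theta> (pair_point k i j ((int a + t) mod int g) t)
                          - phase g k \<theta> (pair_point k i j t t))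
      = (\<Sum>c'\<in>coords g k. \<theta> c' * (\<Sum>t\<in>{0..<int g}.
            Zvec g (pair_point k i j ((int a + t) mod int g) t) c' - Zvec g (pair_point k i j t t) c'))"
    unfolding phase_def
    by (simp add: sum.swap[of _ "{0..<int g}"] sum_subtractf[symmetric] sum_distrib_left
        right_diff_distrib)
  also have "\<dots> = (\<Sum>c'\<in>coords g k. \<theta> c' * (if c' = (i, j, a) then real g else 0))"
    using assms by (intro sum.cong) (simp_all add: sum_Zvec_shifted_pair_point)
  also have "\<dots> = real g * \<theta> (i, j, a)"
    using c finite_coords by (simp add: if_distrib sum.delta' cong: if_cong)
  finally show ?thesis .
qed

lemma sum_near_2pi_multiples:
  fixes f :: "'a \<Rightarrow> real"
  assumes "finite T" "T \<noteq> {}" and near: "\<And>t. t \<in> T \<Longrightarrow> \<exists>m::int. \<bar>f t - 2 * pi * m\<bar> < r"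
  shows "\<exists>M::int. \<bar>(\<Sum>t\<in>T. f t) - 2 * pi * M\<bar> < real (card T) * r"
proof -
  obtain m :: "'a \<Rightarrow> int" where m: "\<And>t. t \<in> T \<Longrightarrow> \<bar>f t - 2 * pi * m t\<bar> < r"
    using near by metis
  have "\<bar>(\<Sum>t\<in>T. f t) - 2 * pi * (\<Sum>t\<in>T. m t)\<bar> = \<bar>\<Sum>t\<in>T. f t - 2 * pi * m t\<bar>"
    by (simp add: sum_subtractf sum_distrib_left)
  also have "\<dots> \<le> (\<Sum>t\<in>T. \<bar>f t - 2 * pi * m t\<bar>)"
    by (rule sum_abs)
  also have "\<dots> < (\<Sum>t\<in>T. r)"
    using assms m by (intro sum_strict_mono) auto
  finally show ?thesis
    by (intro exI[of _ "\<Sum>t\<in>T. m t"]) simp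
qed

lemma near_2pi_over_g_lattice:
  fixes M :: int
  assumes "g > 0" and near: "\<bar>real g * t - 2 * pi * M\<bar> < real g * d"
  shows "\<exists>n::int. - pi \<le> n * (2 * pi / g) \<and> n * (2 * pi / g) < pi
           \<and> (\<exists>m::int. \<bar>t - n * (2 * pi / g) - 2 * pi * m\<bar> < d)"
proof -
  define m where "m = \<lfloor>M / g + 1 / 2\<rfloor>"
  define n where "n = M - int g * m"
  have m_le: "m \<le> M / g + 1 / 2" and m_gt: "M / g + 1 / 2 < m + 1"
    unfolding m_def by linarith+
  have n_eq: "n * (2 * pi / g) = 2 * pi * (M / g - m)"
    using assms(1) by (simp add: n_def field_simps)
  have "2 * pi * (- 1 / 2) \<le> 2 * pi * (M / g - m)"
    using m_le by (intro mult_left_mono) auto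
  moreover have "2 * pi * (M / g - m) < 2 * pi * (1 / 2)"
    by (intro mult_strict_left_mono) (use m_gt pi_gt_zero in linarith)+
  ultimately have "- pi \<le> n * (2 * pi / g)" "n * (2 * pi / g) < pi"
    unfolding n_eq by simp_all
  moreover have "t - n * (2 * pi / g) - 2 * pi * m = (real g * t - 2 * pi * M) / g"
    unfolding n_eq using assms(1) by (simp add: field_simps)
  moreover have "\<bar>(real g * t - 2 * pi * M) / g\<bar> < d"
    using assms by (simp add: abs_divide divide_less_eq mult.commute)
  ultimately show ?thesis
    by metis
qed

lemma clustered_phases_near_lattice:
  assumes c: "c \<in> coords g k"
    and clustered: "\<And>x. x \<in> points g k \<Longrightarrow> \<exists>m::int. \<bar>phase g k \<theta> x - \<omega> - 2 * pi * m\<bar> < d"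
  shows "\<exists>M::int. \<bar>real g * \<theta> c - 2 * pi * M\<bar> < real g * (2 * d)"
proof -
  obtain i j a where c_eq: "c = (i, j, a)"
    using prod_cases3 by blast
  have g: "g > 0"
    using c by (auto simp: coords_def c_eq)
  define X where "X t = pair_point k i j ((int a + t) mod int g) t" for t
  define Y where "Y t = pair_point k i j t t" for t
  have "\<exists>m::int. \<bar>phase g k \<theta> (X t) - phase g k \<theta> (Y t) - 2 * pi * m\<bar> < 2 * d"
    if "t \<in> {0..<int g}" for t
  proof -
    have "X t \<in> points g k" "Y t \<in> points g k"
      using that g unfolding X_def Y_def by (auto intro!: pair_point_in_points)
    then obtain mX mY :: int where
      "\<bar>phase g k \<theta> (X t) - \<omega> - 2 * pi * mX\<bar> < d" "\<bar>phase g k \<theta> (Y t) - \<omega> - 2 * pi * mY\<bar> < d"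
      using clustered by meson
    then have "\<bar>phase g k \<theta> (X t) - phase g k \<theta> (Y t) - 2 * pi * (mX - mY)\<bar> < 2 * d"
      by (simp add: abs_less_iff right_diff_distrib)
    then show ?thesis
      by blast
  qed
  then obtain M :: int where
    "\<bar>(\<Sum>t\<in>{0..<int g}. phase g k \<theta> (X t) - phase g k \<theta> (Y t)) - 2 * pi * M\<bar>
       < real (card {0..<int g}) * (2 * d)"
    using sum_near_2pi_multiples[of "{0..<int g}"] g by fastforce
  then show ?thesis
    using sum_phase_shifted_pair_point[OF c[unfolded c_eq]] c_eq by (auto simp: X_def Y_def)
qed

lemma clustered_phases_imp_in_Bdelta:
  assumes box: "\<theta> \<in> box_d g k"
    and clustered: "\<And>x. x \<in> points g k \<Longrightarrow> \<exists>m::int. \<bar>phase g k \<theta> x - \<omega> - 2 * pi * m\<bar> < \<delta> / 2"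
  shows "\<exists>\<eta>\<in>Lset g k. \<theta> \<in> Bdelta g k \<delta> \<eta>"
proof -
  have "\<exists>n::int. - pi \<le> n * (2 * pi / g) \<and> n * (2 * pi / g) < pi
          \<and> (\<exists>m::int. \<bar>\<theta> c - n * (2 * pi / g) - 2 * pi * m\<bar> < \<delta>)" if c: "c \<in> coords g k" for c
  proof -
    obtain M :: int where "\<bar>real g * \<theta> c - 2 * pi * M\<bar> < real g * (2 * (\<delta> / 2))"
      using clustered_phases_near_lattice[OF c clustered] by blast
    moreover have "g > 0"
      using c by (auto simp: coords_def)
    ultimately show ?thesis
      by (intro near_2pi_over_g_lattice) auto
  qed
  then obtain N m :: "nat \<times> nat \<times> nat \<Rightarrow> int" where
    N: "\<And>c. c \<in> coords g k \<Longrightarrow> - pi \<le> N c * (2 * pi / g) \<and> N c * (2 * pi / g) < pi"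
    and m: "\<And>c. c \<in> coords g k \<Longrightarrow> \<bar>\<theta> c - N c * (2 * pi / g) - 2 * pi * m c\<bar> < \<delta>"
    by metis
  define \<eta> where "\<eta> c = N c * (2 * pi / g)" for c
  have "\<eta> \<in> Lset g k"
    using N by (auto simp: Lset_def box_d_def \<eta>_def)
  moreover have "\<theta> \<in> Bdelta g k \<delta> \<eta>"
    unfolding Bdelta_def using box m
    by (auto simp: \<eta>_def intro!: exI[of _ "\<lambda>c. \<theta> c - \<eta> c - 2 * pi * m c"])
  ultimately show ?thesis
    by blast
qed

lemma norm_sum_cis_le_if_some_phase_far:
  fixes f :: "'a \<Rightarrow> real"
  assumes "finite A" "0 \<le> w" "0 \<le> d" "d \<le> pi"
    and far: "\<And>\<omega>. \<exists>x\<in>A. \<forall>m::int. d \<le> \<bar>f x - \<omega> - 2 * pi * m\<bar>"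
  shows "cmod (\<Sum>x\<in>A. complex_of_real w * cis (f x)) \<le> w * (real (card A) - (1 - cos d))"
proof -
  define S where "S = (\<Sum>x\<in>A. complex_of_real w * cis (f x))"
  obtain x0 where x0: "x0 \<in> A" and x0_far: "\<And>m::int. d \<le> \<bar>f x0 - Arg S - 2 * pi * m\<bar>"
    using far by blast
  have "S * cis (- Arg S) = complex_of_real (cmod S)"
    using rcis_cmod_Arg[of S] by (metis rcis_def cis_mult add.right_inverse cis_zero mult.assoc mult.right_neutral)
  then have "cmod S = Re (S * cis (- Arg S))"
    by simp
  also have "\<dots> = (\<Sum>x\<in>A. w * cos (f x - Arg S))"
    unfolding S_def sum_distrib_right Re_sum by (simp add: mult.assoc cis_mult)
  also have "\<dots> = w * cos (f x0 - Arg S) + (\<Sum>x\<in>A - {x0}. w * cos (f x - Arg S))"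
    using assms(1) x0 by (rule sum.remove)
  also have "\<dots> \<le> w * cos d + (\<Sum>x\<in>A - {x0}. w)"
  proof (intro add_mono mult_left_mono sum_mono)
    show "cos (f x0 - Arg S) \<le> cos d"
      using assms(3,4) x0_far by (intro cos_le_cos_if_far_from_2pi_multiples) (auto simp: algebra_simps)
  qed (use assms(2) in \<open>auto simp: mult_left_le\<close>)
  also have "\<dots> = w * (real (card A) - (1 - cos d))"
    by (simp add: card.remove[OF assms(1) x0] algebra_simps)
  finally show ?thesis
    by (simp add: S_def)
qed

theorem lemma3p2:
  fixes g k :: nat and \<delta> :: real and \<theta> :: "nat \<times> nat \<times> nat \<Rightarrow> real"
  assumes "g \<ge> 2" and "k \<ge> 2"
    and "0 < \<delta>" and "\<delta> < pi / real g"
    and "\<theta> \<in> RB g k \<delta>"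
  shows "cmod (Phi g k \<theta>) \<le> 1 - 11 / 48 * (1 / real g ^ k) * (\<delta> / 2) ^ 2"
proof -
  have "pi / real g \<le> pi / 2"
    using assms(1) by (intro divide_left_mono) auto
  then have \<delta>_le: "\<delta> / 2 \<le> 1"
    using assms(4) pi_less_4 by linarith
  have "\<exists>x\<in>points g k. \<forall>m::int. \<delta> / 2 \<le> \<bar>phase g k \<theta> x - \<omega> - 2 * pi * m\<bar>" for \<omega>
    using clustered_phases_imp_in_Bdelta[where \<omega>=\<omega> and \<delta>=\<delta>] assms(5)
    by (force simp: RB_def not_le)
  then have "cmod (\<Sum>x\<in>points g k. complex_of_real (1 / real g ^ k) * cis (phase g k \<theta> x))
      \<le> 1 / real g ^ k * (real (card (points g k)) - (1 - cos (\<delta> / 2)))"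
    using assms(3) \<delta>_le pi_gt3 by (intro norm_sum_cis_le_if_some_phase_far finite_points) auto
  also have "\<dots> = 1 - 1 / real g ^ k * (1 - cos (\<delta> / 2))"
    using assms(1) by (simp add: card_points right_diff_distrib)
  also have "\<dots> \<le> 1 - 1 / real g ^ k * (11 / 48 * (\<delta> / 2) ^ 2)"
    using one_minus_cos_ge[of "\<delta> / 2"] assms(3) \<delta>_le by (intro diff_left_mono mult_left_mono) auto
  finally show ?thesis
    by (simp add: Phi_def phase_def)
qed

end
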